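(* Let $\mathcal{A}=\{0,1\}$ and let $X$ be the simplified golden-mean tree-shift, i.e. the set of trees $t$ such that for every $x\in\Sigma^*$ the triple $(t_x,t_{x0},t_{x1})$ belongs to $\{(0,0,0),(0,1,1),(1,0,0)\}$. Then $X$ is uniformly strongly irreducible with complete prefix code $\Sigma^2$: for any two patterns $u,v$ accepted by $X$ there exists $t\in X$ with $t|_{S(u)}=u$ and $t|_{wxS(v)}=v$ for every leaf $w$ of $u$ and every $x\in\Sigma^2$.
   Context: $\Sigma=\{0,1\}$. $\Sigma^*$ is the set of finite words, $\Sigma^2$ is the set of words of length $2$, and a tree is $t:\Sigma^*\to\mathcal{A}$ with $t_x=t(x)$. A pattern $u$ is a map on a finite prefix-closed support $S(u)\subseteq\Sigma^*$. A pattern is accepted by $X$ if it occurs (at some node) in some tree of $X$. For $w\in\Sigma^*$, $t|_{wS(v)}=v$ means $t_{wy}=v_y$ for all $y\in S(v)$. A leaf of $u$ is $w\in S(u)$ with $w0,w1\notin S(u)$. *)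

theory Defs
  imports Main
begin

(* Sigma = {0,1} is encoded as bool (0 = False, 1 = True); words in Sigma^* are bool lists,
   concatenation is @. The alphabet A = {0,1} is likewise encoded as bool. *)
type_synonym word = "bool list"
type_synonym tree = "word \<Rightarrow> bool"
(* a pattern is a partial map; its support S(u) is dom u *)
type_synonym pattern = "word \<rightharpoonup> bool"

definition prefix_closed :: "word set \<Rightarrow> bool" where
  "prefix_closed S \<longleftrightarrow> (\<forall>x y. x @ y \<in> S \<longrightarrow> x \<in> S)"

definition is_pattern :: "pattern \<Rightarrow> bool" where
  "is_pattern u \<longleftrightarrow> finite (dom u) \<and> prefix_closed (dom u)"

definition occurs_at :: "tree \<Rightarrow> word \<Rightarrow> pattern \<Rightarrow> bool" where
  "occurs_at t w u \<longleftrightarrow> (\<forall>y \<in> dom u. u y = Some (t (w @ y)))"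

definition accepted :: "tree set \<Rightarrow> pattern \<Rightarrow> bool" where
  "accepted X u \<longleftrightarrow> (\<exists>t \<in> X. \<exists>w. occurs_at t w u)"

definition is_leaf :: "pattern \<Rightarrow> word \<Rightarrow> bool" where
  "is_leaf u w \<longleftrightarrow> w \<in> dom u \<and> w @ [False] \<notin> dom u \<and> w @ [True] \<notin> dom u"

definition golden_mean :: "tree set" where
  "golden_mean = {t. \<forall>x. (t x, t (x @ [False]), t (x @ [True])) \<in>
       {(False, False, False), (False, True, True), (True, False, False)}}"

end

theory Submission
  imports Defs "HOL-Library.Sublist"
begin

text \<open>In the golden-mean shift the two children of a node always carry equal symbols, and a
  node labelled 1 has children labelled 0. Hence a pair of sibling nodes may always be
  relabelled 0 and below them any golden-mean trees may be grafted, whatever their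
  parent carries. Taking \<open>u\<close> from one tree and grafting, below each child of each leaf
  of \<open>u\<close>, a tree with root 0 whose two subtrees both show \<open>v\<close>, places \<open>v\<close> at every node
  \<open>w @ x\<close> with \<open>w\<close> a leaf of \<open>u\<close> and \<open>length x = 2\<close>.\<close>

lemma golden_meanD:
  "t \<in> golden_mean \<Longrightarrow> (t x, t (x @ [False]), t (x @ [True])) \<in>
     {(False, False, False), (False, True, True), (True, False, False)}"
  unfolding golden_mean_def by blast

definition subtree :: "tree \<Rightarrow> word \<Rightarrow> tree" where
  "subtree t w = (\<lambda>y. t (w @ y))"

definition zero_rooted :: "tree \<Rightarrow> tree" where
  "zero_rooted t = (\<lambda>y. case y of [] \<Rightarrow> False | _ # r \<Rightarrow> t r)"

lemma subtree_golden_mean: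
  assumes "t \<in> golden_mean"
  shows "subtree t w \<in> golden_mean"
  unfolding golden_mean_def
proof (intro CollectI allI)
  fix x
  show "(subtree t w x, subtree t w (x @ [False]), subtree t w (x @ [True])) \<in>
     {(False, False, False), (False, True, True), (True, False, False)}"
    using golden_meanD[OF assms, of "w @ x"] by (simp add: subtree_def)
qed

lemma zero_rooted_golden_mean:
  assumes "t \<in> golden_mean"
  shows "zero_rooted t \<in> golden_mean"
  unfolding golden_mean_def
proof (intro CollectI allI)
  fix x
  show "(zero_rooted t x, zero_rooted t (x @ [False]), zero_rooted t (x @ [True])) \<in>
     {(False, False, False), (False, True, True), (True, False, False)}"
    using golden_meanD[OF assms, of "tl x"] by (cases x) (auto simp: zero_rooted_def)
qed

definition prefix_free :: "word set \<Rightarrow> bool" where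
  "prefix_free L \<longleftrightarrow> (\<forall>w \<in> L. \<forall>w' \<in> L. prefix w w' \<longrightarrow> w = w')"

text \<open>The \<open>THE\<close> picks the unique node of \<open>L\<close> above \<open>y\<close> only when \<open>L\<close> is prefix-free.\<close>

definition graft :: "tree \<Rightarrow> word set \<Rightarrow> (word \<Rightarrow> tree) \<Rightarrow> tree" where
  "graft t L s y =
     (if \<exists>w \<in> L. prefix w y
      then let w = THE w. w \<in> L \<and> prefix w y in s w (drop (length w) y)
      else t y)"

lemma graft_below:
  assumes "prefix_free L" and "w \<in> L"
  shows "graft t L s (w @ r) = s w r"
proof -
  have "(THE w'. w' \<in> L \<and> prefix w' (w @ r)) = w"
  proof (rule the_equality)
    fix w' assume w': "w' \<in> L \<and> prefix w' (w @ r)"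
    then have "prefix w' w \<or> prefix w w'"
      using prefix_same_cases[of w' "w @ r" w] by auto
    then show "w' = w" using assms w' unfolding prefix_free_def by metis
  qed (use assms in auto)
  then show ?thesis using assms(2) unfolding graft_def by auto
qed

lemma graft_outside: "\<not> (\<exists>w \<in> L. prefix w y) \<Longrightarrow> graft t L s y = t y"
  unfolding graft_def by simp

text \<open>Closure under siblings keeps the children of every node either both grafted or both
  original; grafted trees with root 0 are then compatible with any parent.\<close>

lemma graft_golden_mean:
  assumes "t \<in> golden_mean" and "\<And>w. w \<in> L \<Longrightarrow> s w \<in> golden_mean"
    and "\<And>w. w \<in> L \<Longrightarrow> s w [] = False"
    and "prefix_free L" and siblings: "\<And>x b. x @ [b] \<in> L \<Longrightarrow> x @ [\<not> b] \<in> L"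
  shows "graft t L s \<in> golden_mean"
  unfolding golden_mean_def
proof (intro CollectI allI)
  fix y
  let ?g = "graft t L s"
  show "(?g y, ?g (y @ [False]), ?g (y @ [True])) \<in>
     {(False, False, False), (False, True, True), (True, False, False)}"
  proof (cases "\<exists>w \<in> L. prefix w y")
    case True
    then obtain w r where "w \<in> L" "y = w @ r" by (auto elim: prefixE)
    then show ?thesis
      using golden_meanD[OF assms(2), of w r] graft_below[OF assms(4), of w t s] by simp
  next
    case outside: False
    show ?thesis
    proof (cases "y @ [False] \<in> L \<or> y @ [True] \<in> L")
      case True
      then have "y @ [b] \<in> L" for b using siblings by (cases b) fastforce+
      then have "?g (y @ [b]) = False" for b
        using graft_below[OF assms(4), of "y @ [b]" t s "[]"] assms(3) by simp
      then show ?thesis by (cases "?g y") auto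
    next
      case False
      then have "?g (y @ [b]) = t (y @ [b])" for b
        using outside by (intro graft_outside) (cases b; auto)
      then show ?thesis using golden_meanD[OF assms(1), of y] graft_outside[OF outside] by simp
    qed
  qed
qed

lemma leaf_no_descendant:
  assumes "is_leaf u w" and "prefix_closed (dom u)" and "prefix (w @ [b]) y"
  shows "y \<notin> dom u"
proof
  assume y: "y \<in> dom u"
  obtain r where "y = (w @ [b]) @ r" using assms(3) by (auto elim: prefixE)
  then have "w @ [b] \<in> dom u" using y assms(2) unfolding prefix_closed_def by blast
  then show False using assms(1) unfolding is_leaf_def by (cases b) auto
qed

definition leaf_children :: "pattern \<Rightarrow> word set" where
  "leaf_children u = {w @ [b] | w b. is_leaf u w}"

lemma prefix_free_leaf_children:
  assumes "prefix_closed (dom u)"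
  shows "prefix_free (leaf_children u)"
  unfolding prefix_free_def
proof (intro ballI impI)
  fix x x' assume "x \<in> leaf_children u" "x' \<in> leaf_children u" and below: "prefix x x'"
  then obtain w b w' b' where leaves: "is_leaf u w" "is_leaf u w'"
    and x: "x = w @ [b]" "x' = w' @ [b']"
    unfolding leaf_children_def by blast
  have "w' \<in> dom u" using leaves(2) unfolding is_leaf_def by blast
  then have "\<not> prefix (w @ [b]) w'" using leaf_no_descendant[OF leaves(1) assms] by blast
  then show "x = x'" using below x by simp
qed

lemma leaf_children_outside_dom:
  assumes "prefix_closed (dom u)" and "y \<in> dom u"
  shows "\<not> (\<exists>w \<in> leaf_children u. prefix w y)"
  using leaf_no_descendant[OF _ assms(1)] assms(2) unfolding leaf_children_def by blast

theorem mainTheorem12: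
  assumes "is_pattern u" and "is_pattern v"
    and "accepted golden_mean u" and "accepted golden_mean v"
  shows "\<exists>t \<in> golden_mean. occurs_at t [] u \<and>
           (\<forall>w x. is_leaf u w \<longrightarrow> length x = 2 \<longrightarrow> occurs_at t (w @ x) v)"
proof -
  have closed: "prefix_closed (dom u)" using assms(1) unfolding is_pattern_def by blast
  obtain t1 w1 where t1: "t1 \<in> golden_mean" "occurs_at t1 w1 u"
    using assms(3) unfolding accepted_def by blast
  obtain t2 w2 where t2: "t2 \<in> golden_mean" "occurs_at t2 w2 v"
    using assms(4) unfolding accepted_def by blast
  let ?L = "leaf_children u"
  let ?s = "\<lambda>_. zero_rooted (subtree t2 w2)"
  define t where "t = graft (subtree t1 w1) ?L ?s"
  have "t \<in> golden_mean"
    unfolding t_def using prefix_free_leaf_children[OF closed]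
    by (intro graft_golden_mean subtree_golden_mean zero_rooted_golden_mean t1 t2)
      (auto simp: zero_rooted_def leaf_children_def)
  moreover have "occurs_at t [] u"
    using t1(2) graft_outside[OF leaf_children_outside_dom[OF closed]]
    unfolding occurs_at_def t_def subtree_def by auto
  moreover have "occurs_at t (w @ x) v" if "is_leaf u w" and "length x = 2" for w x
  proof -
    obtain b c where x: "x = [b, c]"
      using \<open>length x = 2\<close> by (auto simp: numeral_2_eq_2 length_Suc_conv)
    have "t (w @ x @ y) = t2 (w2 @ y)" for y
      using graft_below[OF prefix_free_leaf_children[OF closed], of "w @ [b]" _ _ "c # y"] that
      unfolding t_def leaf_children_def zero_rooted_def subtree_def x by auto
    then show ?thesis using t2(2) unfolding occurs_at_def by simp
  qed
  ultimately show ?thesis by blast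
qed

end
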